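(* Let $\chi>0$, $\phi\in C^1(\mathbb{R})$ with $\phi'>0$, $\phi(0)>0$, and $g\in C^1([0,\infty))$ positive with exactly one $\beta>0$ such that $g'<0$ on $[0,\beta)$ and $g'>0$ on $(\beta,\infty)$. Let $g(\beta)<u_-<\min\{g(0),\lim_{V\to\infty}g(V)\}$ and $0<v_+<\beta<v_-$ with $g(v_\pm)=u_-$. Define $J(V)=V(g(V)-u_-)$ on $[0,v_+]$, $Q(V)=(v_--V)^2\inf_{z\in(V,v_-]}g'(z)$ on $(\beta,v_-)$, $$s_1:=\chi\Big(1-\frac{u_-}{g(\beta)}\Big)^{-1}\Big[\phi\Big(-\sqrt{\tfrac{1}{v_+}\textstyle\int_0^{v_+}J}\Big)-\frac{u_-\phi(0)}{g(\beta)}\Big],\quad s_2:=\chi\Big(1-\frac{u_-}{g(0)}\Big)^{-1}\Big[\phi\Big(\sqrt{\tfrac{1}{v_--\beta}\textstyle\int_\beta^{v_-}Q}\Big)-\frac{u_-\phi(0)}{g(0)}\Big],$$ $s_*=\min\{s_1,s_2\}$, and $B(V)=\frac{s}{\chi}+\frac{u_-}{g(V)}\big(\phi(0)-\frac{s}{\chi}\big)$. If $\chi\phi(0)<s<s_*$, then there exist $v_*\in(0,v_+)$ and $v^*\in(\beta,v_-)$ such that $-\sqrt{J(v_* )}<\phi^{-1}(B(\beta))<0$ and $0<\phi^{-1}(B(0))<\sqrt{Q(v^* )}$. *)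

theory Defs
  imports "HOL-Analysis.Analysis"
begin

end

theory Submission
  imports Defs
begin

text \<open>
  With \<open>r = u\<^sub>- / g(V)\<close>, \<open>B V = (1 - r) s/\<chi> + r \<phi>(0)\<close> is an affine combination of
  \<open>s/\<chi> > \<phi>(0)\<close> and \<open>\<phi>(0)\<close>. At \<open>V = \<beta>\<close> we have \<open>r > 1\<close> and at \<open>V = 0\<close> we have \<open>0 < r < 1\<close>;
  together with \<open>s < s\<^sub>1\<close> resp. \<open>s < s\<^sub>2\<close> this puts \<open>B V\<close> strictly between \<open>\<phi>(0)\<close> and
  \<open>\<phi>(\<mp>\<surd>m)\<close>, where \<open>m\<close> is the integral mean of \<open>J\<close> resp. \<open>Q\<close>, so \<open>\<phi>\<^sup>-\<^sup>1(B V)\<close> lies strictly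
  between \<open>0\<close> and \<open>\<mp>\<surd>m\<close>. A function whose integral mean exceeds \<open>c\<^sup>2\<close> exceeds \<open>c\<^sup>2\<close> at an
  interior point, which yields \<open>v\<^sub>*\<close> and \<open>v\<^sup>*\<close>.
\<close>

lemma integral_mean_gt_imp_ex_gt:
  fixes f :: "real \<Rightarrow> real"
  assumes "a < b" and "C \<ge> 0" and "C * (b - a) < integral {a..b} f"
  shows "\<exists>x\<in>{a<..<b}. C < f x"
proof (rule ccontr)
  assume "\<not> ?thesis"
  then have le: "f x \<le> C" if "x \<in> {a<..<b}" for x
    using that by force
  define h where "h x = (if x \<in> {a<..<b} then f x else 0)" for x
  have "integral {a..b} f = integral {a..b} h"
    by (rule integral_spike[of "{a, b}"]) (auto simp: h_def)
  also have "\<dots> \<le> C * (b - a)"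
  proof (cases "h integrable_on {a..b}")
    case True
    then have "integral {a..b} h \<le> integral {a..b} (\<lambda>_. C)"
      by (rule integral_le) (auto simp: h_def le \<open>C \<ge> 0\<close>)
    then show ?thesis
      using \<open>a < b\<close> by (simp add: mult.commute)
  next
    case False
    then show ?thesis
      using \<open>a < b\<close> \<open>C \<ge> 0\<close> by (simp add: not_integrable_integral)
  qed
  finally show False
    using assms(3) by simp
qed

lemma sqrt_integral_mean_gt_imp_ex_sqrt_gt:
  fixes f :: "real \<Rightarrow> real"
  assumes "a < b" and "0 \<le> c" and "c < sqrt (integral {a..b} f / (b - a))"
  shows "\<exists>x\<in>{a<..<b}. c < sqrt (f x)"
proof -
  let ?m = "integral {a..b} f / (b - a)"
  have "0 < sqrt ?m"
    using assms(2,3) by linarith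
  then have "0 \<le> ?m"
    by simp
  have "c\<^sup>2 < (sqrt ?m)\<^sup>2"
    using assms(2,3) by (intro power_strict_mono) auto
  then have "c\<^sup>2 < ?m"
    using \<open>0 \<le> ?m\<close> by simp
  then have "c\<^sup>2 * (b - a) < integral {a..b} f"
    using \<open>a < b\<close> by (simp add: pos_less_divide_eq)
  then obtain x where "x \<in> {a<..<b}" "c\<^sup>2 < f x"
    using integral_mean_gt_imp_ex_gt[OF \<open>a < b\<close> zero_le_power2] by blast
  moreover have "c < sqrt (f x)"
    using \<open>c\<^sup>2 < f x\<close> \<open>0 \<le> c\<close> real_less_rsqrt by blast
  ultimately show ?thesis
    by blast
qed

lemma inv_strict_mono_between:
  fixes f :: "real \<Rightarrow> real"
  assumes "strict_mono f" and "continuous_on UNIV f" and "f a < y" and "y < f b"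
  shows "a < inv f y \<and> inv f y < b"
proof -
  have "a < b"
    using assms(1,3,4) by (metis order.strict_trans strict_mono_less)
  then obtain x where "a \<le> x" "x \<le> b" "f x = y"
    using IVT'[of f a y b] assms(2-4) continuous_on_subset by fastforce
  moreover have "inv f y = x"
    using \<open>f x = y\<close> assms(1) strict_mono_imp_inj_on inv_f_f by metis
  ultimately show ?thesis
    using assms(3,4) by (metis order_le_less less_irrefl)
qed

lemma affine_between_of_weight_gt_1:
  fixes chi s r p q :: real
  assumes "chi > 0" and "r > 1" and "chi * q < s" and "s < chi * inverse (1 - r) * (p - r * q)"
  shows "p < s / chi + r * (q - s / chi)" and "s / chi + r * (q - s / chi) < q"
proof -
  define k where "k = s / chi"
  have "k < inverse (1 - r) * (p - r * q)"
    using assms(1,4) by (simp add: k_def pos_divide_less_eq mult.commute mult.left_commute)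
  then have "(1 - r) * (inverse (1 - r) * (p - r * q)) < (1 - r) * k"
    using \<open>r > 1\<close> by (intro mult_strict_left_mono_neg) auto
  moreover have "(1 - r) * (inverse (1 - r) * (p - r * q)) = p - r * q"
    using \<open>r > 1\<close> by simp
  ultimately have "p - r * q < (1 - r) * k"
    by linarith
  then show "p < s / chi + r * (q - s / chi)"
    by (simp add: k_def[symmetric] algebra_simps)
  have "q < k"
    using assms(1,3) by (simp add: k_def pos_less_divide_eq mult.commute)
  then have "(r - 1) * (q - k) < 0"
    using \<open>r > 1\<close> by (intro mult_pos_neg) auto
  then show "s / chi + r * (q - s / chi) < q"
    by (simp add: k_def[symmetric] algebra_simps)
qed

lemma affine_between_of_weight_lt_1:
  fixes chi s r p q :: real
  assumes "chi > 0" and "0 < r" and "r < 1" and "chi * q < s"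
    and "s < chi * inverse (1 - r) * (p - r * q)"
  shows "q < s / chi + r * (q - s / chi)" and "s / chi + r * (q - s / chi) < p"
proof -
  define k where "k = s / chi"
  have "q < k"
    using assms(1,4) by (simp add: k_def pos_less_divide_eq mult.commute)
  then have "(1 - r) * (q - k) < 0"
    using \<open>r < 1\<close> by (intro mult_pos_neg) auto
  then show "q < s / chi + r * (q - s / chi)"
    by (simp add: k_def[symmetric] algebra_simps)
  have "k < inverse (1 - r) * (p - r * q)"
    using assms(1,5) by (simp add: k_def pos_divide_less_eq mult.commute mult.left_commute)
  then have "(1 - r) * k < (1 - r) * (inverse (1 - r) * (p - r * q))"
    using \<open>r < 1\<close> by (intro mult_strict_left_mono) auto
  moreover have "(1 - r) * (inverse (1 - r) * (p - r * q)) = p - r * q"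
    using \<open>r < 1\<close> by simp
  ultimately have "(1 - r) * k < p - r * q"
    by linarith
  then show "s / chi + r * (q - s / chi) < p"
    by (simp add: k_def[symmetric] algebra_simps)
qed

theorem proposition2p10:
  fixes chi s beta um vp vm :: real
    and phi phi' g g' :: "real \<Rightarrow> real"
    and L :: ereal
  assumes chi_pos: "chi > 0"
    and phi_deriv: "\<And>x. (phi has_real_derivative phi' x) (at x)"
    and phi'_cont: "continuous_on UNIV phi'"
    and phi'_pos: "\<And>x. phi' x > 0"
    and phi0_pos: "phi 0 > 0"
    and g_deriv: "\<And>x. x \<ge> 0 \<Longrightarrow> (g has_real_derivative g' x) (at x within {0..})"
    and g'_cont: "continuous_on {0..} g'"
    and g_pos: "\<And>x. x \<ge> 0 \<Longrightarrow> g x > 0"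
    and beta_pos: "beta > 0"
    and g'_neg: "\<And>x. 0 \<le> x \<Longrightarrow> x < beta \<Longrightarrow> g' x < 0"
    and g'_pos: "\<And>x. beta < x \<Longrightarrow> g' x > 0"
    and g_lim: "((\<lambda>V. ereal (g V)) \<longlongrightarrow> L) at_top"
    and um_low: "g beta < um"
    and um_up0: "um < g 0"
    and um_upL: "ereal um < L"
    and vp: "0 < vp" "vp < beta" "g vp = um"
    and vm: "beta < vm" "g vm = um"
  defines "J \<equiv> \<lambda>V. V * (g V - um)"
    and "Q \<equiv> \<lambda>V. (vm - V)\<^sup>2 * Inf (g' ` {V<..vm})"
    and "s1 \<equiv> chi * inverse (1 - um / g beta) *
               (phi (- sqrt (integral {0..vp} (\<lambda>V. V * (g V - um)) / vp)) - um * phi 0 / g beta)"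
    and "s2 \<equiv> chi * inverse (1 - um / g 0) *
               (phi (sqrt (integral {beta..vm} (\<lambda>V. (vm - V)\<^sup>2 * Inf (g' ` {V<..vm})) / (vm - beta))) - um * phi 0 / g 0)"
    and "B \<equiv> \<lambda>V. s / chi + um / g V * (phi 0 - s / chi)"
  assumes s_low: "chi * phi 0 < s"
    and s_up: "s < min s1 s2"
  shows "\<exists>v_low \<in> {0<..<vp}. \<exists>v_up \<in> {beta<..<vm}.
           - sqrt (J v_low) < inv phi (B beta) \<and> inv phi (B beta) < 0 \<and>
           0 < inv phi (B 0) \<and> inv phi (B 0) < sqrt (Q v_up)"
proof -
  have phi_mono: "strict_mono phi"
    by (rule strict_monoI) (use DERIV_pos_imp_increasing phi_deriv phi'_pos in blast)
  have phi_cont: "continuous_on UNIV phi"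
    using phi_deriv by (meson DERIV_isCont continuous_at_imp_continuous_on)
  have "g beta > 0" "g 0 > 0"
    using g_pos beta_pos by auto
  then have um_pos: "um > 0"
    using um_low by linarith
  define a where "a = sqrt (integral {0..vp} J / vp)"
  have "s < chi * inverse (1 - um / g beta) * (phi (- a) - um / g beta * phi 0)"
    using s_up by (simp add: s1_def a_def J_def)
  moreover have "um / g beta > 1"
    using um_low \<open>g beta > 0\<close> by simp
  ultimately have "phi (- a) < B beta" "B beta < phi 0"
    using affine_between_of_weight_gt_1[OF chi_pos _ s_low] unfolding B_def by blast+
  then have at_beta: "- a < inv phi (B beta)" "inv phi (B beta) < 0"
    using inv_strict_mono_between[OF phi_mono phi_cont] by blast+
  then obtain v_low where "v_low \<in> {0<..<vp}" "- inv phi (B beta) < sqrt (J v_low)"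
    using sqrt_integral_mean_gt_imp_ex_sqrt_gt[OF \<open>0 < vp\<close>, of "- inv phi (B beta)" J]
    by (auto simp: a_def)
  define b where "b = sqrt (integral {beta..vm} Q / (vm - beta))"
  have "s < chi * inverse (1 - um / g 0) * (phi b - um / g 0 * phi 0)"
    using s_up by (simp add: s2_def b_def Q_def)
  moreover have "0 < um / g 0" "um / g 0 < 1"
    using um_pos um_up0 \<open>g 0 > 0\<close> by simp_all
  ultimately have "phi 0 < B 0" "B 0 < phi b"
    using affine_between_of_weight_lt_1[OF chi_pos _ _ s_low] unfolding B_def by blast+
  then have at_0: "0 < inv phi (B 0)" "inv phi (B 0) < b"
    using inv_strict_mono_between[OF phi_mono phi_cont] by blast+
  then obtain v_up where "v_up \<in> {beta<..<vm}" "inv phi (B 0) < sqrt (Q v_up)"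
    using sqrt_integral_mean_gt_imp_ex_sqrt_gt[OF \<open>beta < vm\<close>, of "inv phi (B 0)" Q]
    by (auto simp: b_def)
  show ?thesis
    using \<open>v_low \<in> _\<close> \<open>- inv phi (B beta) < _\<close> at_beta \<open>v_up \<in> _\<close> \<open>inv phi (B 0) < sqrt _\<close> at_0
    by force
qed

end
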